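(* Let $p$ be a prime and $n$ a positive integer. Then $n\in\mathcal{M}_p^{(1)}\cup\mathcal{M}_p^{(2)}$ if and only if $p\mid n$, $n/p\in\mathcal{W}$ and $p\in\mathfrak{M}_{n/p}$.
   Context: For positive integers $k,n$ let $S_k(n)=\sum_{i=1}^{n} i^k$. For an integer $a$, $\mathcal{M}_a$ denotes the set of positive integers $n$ such that $S_n(n)\equiv a\pmod{n}$. For a prime $p$: $\mathcal{M}_p^{(1)}=\{n\in\mathcal{M}_p : p\mid n,\ p^2\nmid n\}$ and $\mathcal{M}_p^{(2)}=\{n\in\mathcal{M}_p : p^2\mid n,\ p^3\nmid n\}$. A positive integer $n$ is a weak primary pseudoperfect number if $\sum_{q\mid n,\ q\text{ prime}} \frac{n}{q}+1\equiv 0\pmod{n}$; $\mathcal{W}$ denotes the set of such numbers. For a positive integer $Q$, $\mathfrak{M}_Q=\{m\in\mathbb{N} : S_{Qm}(Qm)\equiv m\pmod{Qm}\}$. *)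

theory Defs
  imports "HOL-Number_Theory.Number_Theory"
begin

definition S :: "nat \<Rightarrow> nat \<Rightarrow> int" where
  "S k n = (\<Sum>i=1..n. (int i) ^ k)"

definition M :: "int \<Rightarrow> nat set" where
  "M a = {n. n > 0 \<and> [S n n = a] (mod int n)}"

definition M1 :: "nat \<Rightarrow> nat set" where
  "M1 p = {n \<in> M (int p). p dvd n \<and> \<not> p^2 dvd n}"

definition M2 :: "nat \<Rightarrow> nat set" where
  "M2 p = {n \<in> M (int p). p^2 dvd n \<and> \<not> p^3 dvd n}"

definition W :: "nat set" where
  "W = {n. n > 0 \<and> [(\<Sum>q\<in>prime_factors n. n div q) + 1 = 0] (mod n)}"

definition frakM :: "nat \<Rightarrow> nat set" where
  "frakM Q = {m. m > 0 \<and> [S (Q*m) (Q*m) = int m] (mod int (Q*m))}"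

end

theory Submission
  imports Defs
begin

text \<open>
  Write \<open>n = p m\<close>. Modulo any divisor \<open>d\<close> of \<open>n\<close>, periodicity gives
  \<open>S\<^sub>n(n) \<equiv> (n/d) S\<^sub>n(d)\<close>. For a prime power \<open>d = q\<^sup>e\<close>, the sum \<open>S\<^sub>n(q\<^sup>e)\<close> vanishes
  modulo \<open>q\<^sup>e\<close> unless \<open>(q - 1) | n\<close> (multiply by a primitive root), and is \<open>\<equiv> \<phi>(q\<^sup>e)\<close>
  once \<open>\<phi>(q\<^sup>e) | n\<close> (Euler). Hence \<open>S\<^sub>n(n) \<equiv> p (mod n)\<close>, read modulo \<open>q\<close> for the
  primes \<open>q \<noteq> p\<close> dividing \<open>m\<close> and modulo \<open>p\<^sup>2\<close> when \<open>p | m\<close>, forces \<open>p\<^sup>3 \<not>| n\<close>,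
  \<open>q\<^sup>2 \<not>| m\<close> and \<open>q | m/q + 1\<close> for every prime \<open>q | m\<close>; that is, \<open>m\<close> is a weak primary
  pseudoperfect number. Finally \<open>p \<in> \<MM>\<^sub>m\<close> says literally \<open>S\<^sub>n(n) \<equiv> p (mod n)\<close>.
\<close>

lemma S_mult_cong: "[S k (c * d) = int c * S k d] (mod int d)"
proof (induction c)
  case 0
  then show ?case by (simp add: S_def)
next
  case (Suc c)
  have "S k (Suc c * d) = S k (c * d) + (\<Sum>i=c*d+1..c*d+d. (int i)^k)"
    unfolding S_def using sum.ub_add_nat[of 1 "c*d" "\<lambda>i. (int i)^k" d] by (simp add: add.commute)
  also have "(\<Sum>i=c*d+1..c*d+d. (int i)^k) = (\<Sum>i=1..d. (int (i + c*d))^k)"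
    using sum.shift_bounds_cl_nat_ivl[of "\<lambda>i. (int i)^k" 1 "c*d" d] by (simp add: add.commute)
  also have "[S k (c * d) + \<dots> = int c * S k d + S k d] (mod int d)"
    unfolding S_def
  proof (intro cong_add Suc.IH[unfolded S_def] cong_sum cong_pow)
    show "[int (i + c*d) = int i] (mod int d)" for i
      by (simp add: cong_iff_dvd_diff)
  qed
  finally show ?case by (simp add: algebra_simps)
qed

lemma S_cong_div_mult:
  assumes "d dvd n"
  shows "[S k n = int (n div d) * S k d] (mod int d)"
  using S_mult_cong[of k "n div d" d] assms by simp

lemma S_prime_power_cong_totient:
  assumes q: "prime q" and "e > 0" and tk: "totient (q^e) dvd k" and ek: "e \<le> k"
  shows "[S k (q^e) = int (totient (q^e))] (mod int (q^e))"
proof -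
  have "[S k (q^e) = (\<Sum>i=1..q^e. if coprime i q then 1 else 0 :: int)] (mod int (q^e))"
    unfolding S_def
  proof (rule cong_sum)
    fix i assume "i \<in> {1..q^e}"
    show "[(int i)^k = (if coprime i q then 1 else 0)] (mod int (q^e))"
    proof (cases "coprime i q")
      case True
      then have "coprime i (q^e)"
        by simp
      then have "[i ^ totient (q^e) = 1] (mod q^e)"
        by (rule euler_theorem)
      then have "[(i ^ totient (q^e)) ^ (k div totient (q^e)) = 1 ^ (k div totient (q^e))] (mod q^e)"
        by (rule cong_pow)
      then have "[i ^ k = 1] (mod q^e)"
        using tk by (simp add: power_mult[symmetric])
      then have "[int (i ^ k) = int 1] (mod int (q^e))"
        using cong_int_iff by blast
      then show ?thesis
        using True by simp
    next
      case False
      then have "q dvd i"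
        using q by (meson coprime_commute prime_imp_coprime)
      then have "q^e dvd i^e"
        by (rule dvd_power_same)
      also have "i^e dvd i^k"
        using ek by (rule le_imp_power_dvd)
      finally have "int (q^e) dvd (int i)^k"
        by (metis of_nat_dvd_iff of_nat_power)
      then show ?thesis
        using False by (simp add: cong_0_iff)
    qed
  qed
  also have "(\<Sum>i=1..q^e. if coprime i q then 1 else 0 :: int) = int (card {i\<in>{1..q^e}. coprime i q})"
    by (simp add: sum.If_cases Int_def conj_commute)
  also have "{i\<in>{1..q^e}. coprime i q} = totatives (q^e)"
    using \<open>e > 0\<close> by (auto simp: totatives_def)
  finally show ?thesis
    by (simp add: totient_def)
qed

lemma bij_betw_mult_mod:
  fixes g d :: nat
  assumes "d > 0" "coprime g d"
  shows "bij_betw (\<lambda>i. (g * i) mod d) {..<d} {..<d}"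
proof -
  have inj: "inj_on (\<lambda>i. (g * i) mod d) {..<d}"
  proof (rule inj_onI)
    fix i j assume "i \<in> {..<d}" "j \<in> {..<d}" "(g * i) mod d = (g * j) mod d"
    then show "i = j"
      using assms(2) cong_mult_lcancel_nat[of g d i j] by (simp add: cong_def)
  qed
  moreover have "(\<lambda>i. (g * i) mod d) ` {..<d} = {..<d}"
    using assms(1) inj by (intro card_subset_eq) (auto simp: card_image)
  ultimately show ?thesis
    by (simp add: bij_betw_def)
qed

lemma dvd_S_if_coprime_pow_sub_one:
  assumes d: "d > 0" and k: "k > 0" and g: "coprime g d"
    and gk: "coprime (int g ^ k - 1) (int d)"
  shows "int d dvd S k d"
proof -
  define T where "T = (\<Sum>i<d. (int i)^k)"
  have S_T: "S k d = T + (int d)^k"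
  proof -
    have "S k d = (\<Sum>i<d. (int (Suc i))^k)"
      unfolding S_def by (rule sum.reindex_bij_witness[of _ "\<lambda>i. i + 1" "\<lambda>i. i - 1"]) auto
    also have "\<dots> = (\<Sum>i<Suc d. (int i)^k)"
      using k by (subst sum.lessThan_Suc_shift) (simp add: zero_power)
    finally show ?thesis
      by (simp add: T_def)
  qed
  \<comment> \<open>multiplication by \<open>g\<close> permutes the residues, so \<open>T \<equiv> g\<^sup>k T\<close>\<close>
  have "T = (\<Sum>i<d. (int ((g * i) mod d))^k)"
    unfolding T_def using sum.reindex_bij_betw[OF bij_betw_mult_mod[OF d g], of "\<lambda>i. (int i)^k"] by simp
  also have "[\<dots> = (\<Sum>i<d. (int g)^k * (int i)^k)] (mod int d)"
  proof (rule cong_sum)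
    fix i
    have "[int ((g * i) mod d) = int g * int i] (mod int d)"
      by (metis cong_int_iff cong_mod_left cong_refl of_nat_mult)
    then show "[(int ((g * i) mod d))^k = (int g)^k * (int i)^k] (mod int d)"
      by (metis cong_pow power_mult_distrib)
  qed
  also have "(\<Sum>i<d. (int g)^k * (int i)^k) = (int g)^k * T"
    by (simp add: sum_distrib_left T_def)
  finally have "int d dvd ((int g)^k - 1) * T"
    by (simp add: cong_iff_dvd_diff algebra_simps dvd_diff_commute)
  then have "int d dvd T"
    using gk by (metis coprime_commute coprime_dvd_mult_right_iff)
  then show ?thesis
    using k S_T by simp
qed

lemma prime_obtain_pow_not_cong_one:
  fixes q k :: nat
  assumes q: "prime q" and "\<not> (q - 1) dvd k"
  obtains g where "coprime g q" "\<not> [g ^ k = 1] (mod q)"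
proof -
  obtain g where g: "residue_primroot q g"
    using prime_primitive_root_exists q prime_gt_1_nat by blast
  then have "coprime g q" "ord q g = q - 1"
    using q by (auto simp: residue_primroot_def totient_prime coprime_commute)
  then show ?thesis
    using that \<open>\<not> (q - 1) dvd k\<close> ord_divides by metis
qed

lemma prime_power_dvd_S:
  assumes q: "prime q" and "k > 0" and "\<not> (q - 1) dvd k"
  shows "int (q^e) dvd S k (q^e)"
proof -
  obtain g where g: "coprime g q" and gk: "\<not> [g ^ k = 1] (mod q)"
    using prime_obtain_pow_not_cong_one[OF q \<open>\<not> (q - 1) dvd k\<close>] .
  have "\<not> int q dvd int g ^ k - 1"
    using gk by (metis cong_iff_dvd_diff cong_int_iff of_nat_1 of_nat_power)
  then have "coprime (int g ^ k - 1) (int q)"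
    using q by (metis coprime_commute prime_imp_coprime prime_nat_int_transfer)
  then show ?thesis
    using g q \<open>k > 0\<close> by (intro dvd_S_if_coprime_pow_sub_one) (auto simp: prime_gt_0_nat)
qed

lemma cong_mult_pred_one_iff:
  fixes x q :: nat
  shows "[int x * (int q - 1) = 1] (mod int q) \<longleftrightarrow> q dvd x + 1"
proof -
  have "[int x * (int q - 1) = 1] (mod int q) \<longleftrightarrow> int q dvd int q * int x - int (x + 1)"
    by (simp add: cong_iff_dvd_diff algebra_simps)
  then show ?thesis
    using of_nat_dvd_iff[of q "x + 1"] by (simp add: dvd_diff_right_iff)
qed

lemma M_cong_div_mult:
  assumes "n \<in> M a" "d dvd n"
  shows "[int (n div d) * S n d = a] (mod int d)"
proof -
  have "[S n n = a] (mod int n)"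
    using assms(1) by (simp add: M_def)
  then have "[S n n = a] (mod int d)"
    by (rule cong_dvd_modulus) (use assms(2) in simp)
  with S_cong_div_mult[OF assms(2)] show ?thesis
    using cong_sym cong_trans by blast
qed

lemma M_prime_power_pred_dvd:
  assumes n: "n \<in> M a" and q: "prime q" and qe: "q^e dvd n" and a: "\<not> int (q^e) dvd a"
  shows "(q - 1) dvd n"
proof (rule ccontr)
  assume "\<not> (q - 1) dvd n"
  moreover have "n > 0"
    using n by (simp add: M_def)
  ultimately have "int (q^e) dvd int (n div q^e) * S n (q^e)"
    using prime_power_dvd_S[OF q] by simp
  then have "int (q^e) dvd a"
    using cong_dvd_iff[OF M_cong_div_mult[OF n qe]] by simp
  with a show False ..
qed

lemma M_prime_power_cong_totient:
  assumes n: "n \<in> M a" and q: "prime q" and "e > 0" and qe: "q^e dvd n"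
    and tn: "totient (q^e) dvd n"
  shows "[int (n div q^e) * int (totient (q^e)) = a] (mod int (q^e))"
proof -
  have "e < q^e"
    using q by (simp add: power_gt_expt prime_gt_Suc_0_nat)
  also have "q^e \<le> n"
    using n qe by (intro dvd_imp_le) (simp_all add: M_def)
  finally have "e \<le> n"
    by simp
  then have "[S n (q^e) = int (totient (q^e))] (mod int (q^e))"
    by (rule S_prime_power_cong_totient[OF q \<open>e > 0\<close> tn])
  then have "[int (n div q^e) * S n (q^e) = int (n div q^e) * int (totient (q^e))] (mod int (q^e))"
    by (rule cong_scalar_left)
  with M_cong_div_mult[OF n qe] show ?thesis
    using cong_sym cong_trans by blast
qed

lemma M_prime_cube_not_dvd:
  assumes p: "prime p" and n: "n \<in> M (int p)"
  shows "\<not> p^3 dvd n"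
proof
  assume "p^3 dvd n"
  then obtain r where "n = p^3 * r" ..
  then have r: "n = p^2 * (p * r)"
    by (simp add: power_numeral_reduce)
  have "int p dvd int p * S n p"
    by simp
  then have "int p dvd S n (p^2)"
    using cong_dvd_iff[OF S_mult_cong[of n p p]] by (simp add: power2_eq_square)
  moreover have "n div p^2 = p * r"
    using r p by (simp add: prime_gt_0_nat)
  ultimately have "int (p^2) dvd int (n div p^2) * S n (p^2)"
    by (simp add: power2_eq_square mult_dvd_mono)
  then have "p^2 dvd p"
    using cong_dvd_iff[OF M_cong_div_mult[OF n, of "p^2"]] r by (simp flip: of_nat_power)
  then have "p^2 \<le> p"
    using p by (simp add: dvd_imp_le prime_gt_0_nat)
  moreover have "p < p^2"
    using prime_gt_1_nat[OF p] by (simp add: power2_eq_square)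
  ultimately show False
    by simp
qed

lemma M_prime_cofactor_other_prime_factor:
  assumes n: "p * m \<in> M (int p)" and p: "prime p" and q: "prime q" "q \<noteq> p"
    and qm: "q dvd m"
  shows "\<not> q^2 dvd m \<and> q dvd m div q + 1"
proof -
  have qn: "q dvd p * m"
    using qm by simp
  have "coprime q p"
    using p q by (simp add: primes_coprime)
  then have qp: "\<not> int q dvd int p" and cop: "coprime (int p) (int q)"
    using q by (auto simp: coprime_commute)
  have div_q: "p * m div q = p * (m div q)"
    using qm by (simp add: div_mult_swap)
  have sq: "\<not> q^2 dvd m"
  proof
    assume "q^2 dvd m"
    then have "q dvd m div q"
      by (simp add: power2_eq_square dvd_mult_imp_div)
    then have "int q dvd int (p * m div q) * S (p * m) q"
      by (simp add: div_q)
    then have "int q dvd int p"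
      using cong_dvd_iff[OF M_cong_div_mult[OF n qn]] by simp
    with qp show False ..
  qed
  have "(q - 1) dvd p * m"
    using M_prime_power_pred_dvd[OF n q(1), of 1] qn qp by simp
  then have "[int (p * m div q) * (int q - 1) = int p] (mod int q)"
    using M_prime_power_cong_totient[OF n q(1), of 1] qn q(1) prime_gt_1_nat[OF q(1)]
    by (simp add: totient_prime of_nat_diff)
  then have "[int p * (int (m div q) * (int q - 1)) = int p * 1] (mod int q)"
    by (simp add: div_q mult.assoc)
  then have "[int (m div q) * (int q - 1) = 1] (mod int q)"
    by (rule cong_mult_lcancel[OF cop, THEN iffD1])
  with sq show ?thesis
    by (simp add: cong_mult_pred_one_iff)
qed

lemma M_prime_cofactor_self_factor:
  assumes n: "p * m \<in> M (int p)" and p: "prime p" and pm: "p dvd m"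
  shows "\<not> p^2 dvd m \<and> p dvd m div p + 1"
proof -
  have p1: "p > 1"
    using p prime_gt_1_nat by blast
  have p2: "p^2 dvd p * m"
    using pm by (simp add: power2_eq_square)
  have sq: "\<not> p^2 dvd m"
  proof
    assume "p^2 dvd m"
    then have "p * p^2 dvd p * m"
      by (rule mult_dvd_mono[OF dvd_refl])
    with M_prime_cube_not_dvd[OF p n] show False
      by (simp add: power_numeral_reduce)
  qed
  have "\<not> p^2 dvd p"
    using p1 by (simp add: power2_eq_square)
  then have "(p - 1) dvd p * m"
    using M_prime_power_pred_dvd[OF n p p2] by (simp flip: of_nat_power)
  then have "(p - 1) dvd m"
    using p1 coprime_diff_one_left_nat[of p] by (simp add: coprime_dvd_mult_right_iff)
  then have "totient (p^2) dvd p * m"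
    using p by (simp add: totient_prime_power mult_dvd_mono)
  then have "[int (p * m div p^2) * int (totient (p^2)) = int p] (mod int (p^2))"
    using M_prime_power_cong_totient[OF n p _ p2] by simp
  moreover have "p * m div p^2 = m div p"
    by (simp add: power2_eq_square div_mult2_eq)
  moreover have "int (totient (p^2)) = int p * (int p - 1)"
    using p p1 by (simp add: totient_prime_power of_nat_diff)
  ultimately have "int p * int p dvd int (m div p) * (int p * (int p - 1)) - int p"
    by (simp add: cong_iff_dvd_diff power2_eq_square)
  also have "int (m div p) * (int p * (int p - 1)) - int p = int p * (int (m div p) * (int p - 1) - 1)"
    by (simp add: algebra_simps)
  finally have "[int (m div p) * (int p - 1) = 1] (mod int p)"
    using p1 by (simp add: cong_iff_dvd_diff)
  with sq show ?thesis
    by (simp add: cong_mult_pred_one_iff)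
qed

lemma prime_factor_dvd_sum_cofactors_plus_one:
  assumes r: "r \<in> prime_factors m" and r_cofactor: "r dvd m div r + 1"
  shows "r dvd (\<Sum>q\<in>prime_factors m. m div q) + 1"
proof -
  have rp: "prime r" and rm: "r dvd m"
    using r by (auto simp: in_prime_factors_iff)
  have "r dvd m div s" if s: "s \<in> prime_factors m - {r}" for s
  proof -
    have "prime s" "s dvd m" "s \<noteq> r"
      using s by (auto simp: in_prime_factors_iff)
    then have "\<not> r dvd s"
      using rp primes_dvd_imp_eq by blast
    moreover have "r dvd s * (m div s)"
      using rm \<open>s dvd m\<close> by simp
    ultimately show ?thesis
      using rp prime_dvd_mult_iff by blast
  qed
  then have "r dvd (\<Sum>q\<in>prime_factors m - {r}. m div q)"
    by (rule dvd_sum)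
  with r_cofactor have "r dvd (m div r + 1) + (\<Sum>q\<in>prime_factors m - {r}. m div q)"
    by (rule dvd_add)
  also have "\<dots> = (\<Sum>q\<in>prime_factors m. m div q) + 1"
    using sum.remove[OF finite_set_mset r, of "\<lambda>q. m div q"] by (simp add: add_ac)
  finally show ?thesis .
qed

lemma W_memberI:
  assumes m: "m > 0"
    and factors: "\<And>q. prime q \<Longrightarrow> q dvd m \<Longrightarrow> \<not> q^2 dvd m \<and> q dvd m div q + 1"
  shows "m \<in> W"
proof -
  define X where "X = (\<Sum>q\<in>prime_factors m. m div q) + 1"
  have "m dvd X"
  proof (rule multiplicity_le_imp_dvd)
    fix r :: nat
    assume r: "prime r"
    show "multiplicity r m \<le> multiplicity r X"
    proof (cases "r dvd m")
      case True
      with factors[OF r] have "multiplicity r m = 1"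
        by (intro multiplicity_eqI) (auto simp: power2_eq_square)
      moreover have "r dvd X"
        unfolding X_def using factors[OF r True] r True m
        by (intro prime_factor_dvd_sum_cofactors_plus_one) (auto simp: in_prime_factors_iff)
      then have "multiplicity r X \<ge> 1"
        using r by (intro multiplicity_geI) (auto simp: X_def)
      ultimately show ?thesis
        by simp
    qed (simp add: not_dvd_imp_multiplicity_0)
  qed (use m in simp)
  then show ?thesis
    using m by (simp add: W_def X_def cong_0_iff)
qed

lemma M_prime_cofactor_in_W:
  assumes n: "p * m \<in> M (int p)" and p: "prime p"
  shows "m \<in> W"
proof (rule W_memberI)
  show "m > 0"
    using n by (simp add: M_def)
next
  fix q
  assume "prime q" "q dvd m"
  then show "\<not> q^2 dvd m \<and> q dvd m div q + 1"
    using M_prime_cofactor_other_prime_factor[OF n p] M_prime_cofactor_self_factor[OF n p]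
    by (cases "q = p") auto
qed

lemma frakM_iff_M: "m \<in> frakM Q \<longleftrightarrow> Q * m \<in> M (int m)"
  by (cases "Q = 0") (auto simp: frakM_def M_def S_def mult.commute)

lemma M1_Un_M2: "M1 p \<union> M2 p = {n \<in> M (int p). p dvd n \<and> \<not> p^3 dvd n}"
proof -
  have p23: "p^2 dvd p^3"
    by (rule le_imp_power_dvd) simp
  show ?thesis
    unfolding M1_def M2_def by (auto dest: dvd_trans[OF p23] dvd_trans[OF dvd_power[of 2 p]])
qed

theorem mainTheorem14:
  fixes p n :: nat
  assumes "prime p" and "n > 0"
  shows "n \<in> M1 p \<union> M2 p \<longleftrightarrow> p dvd n \<and> n div p \<in> W \<and> p \<in> frakM (n div p)"
proof -
  have "n \<in> M1 p \<union> M2 p \<longleftrightarrow> p dvd n \<and> n \<in> M (int p)"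
    using M1_Un_M2 M_prime_cube_not_dvd[OF \<open>prime p\<close>] by auto
  also have "\<dots> \<longleftrightarrow> p dvd n \<and> n div p \<in> W \<and> n \<in> M (int p)"
    using M_prime_cofactor_in_W[OF _ \<open>prime p\<close>] by auto
  also have "\<dots> \<longleftrightarrow> p dvd n \<and> n div p \<in> W \<and> p \<in> frakM (n div p)"
    by (auto simp: frakM_iff_M)
  finally show ?thesis .
qed

end
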